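(* Let $j,m\ge1$ be integers, let $b:(0,\infty)\times\mathbb R^2\times\mathbb R^2\to\mathbb C$ be $(j,m)$-adapted, and let $\mathcal E\subset[1,2]$ be finite. Then for $F\in L^2(\mathbb R^4)$, $$\|S[F,b]\|_{L^2(\mathbb R^2\times\mathcal E)}\le c\,\|b\|_\infty\,2^{j-\frac m2}(\#\mathcal E)^{1/2}\|F\|_{L^2(\mathbb R^4)},$$ with $c$ an absolute constant.
   Context: For $F:\mathbb R^2\times\mathbb R^2\to\mathbb C$ (with Fourier transform $\widehat F$ on $\mathbb R^4$, $\widehat F(\xi)=\int e^{-i\langle x,\xi\rangle}F(x)dx$), a fixed choice of sign $\pm$, and a symbol $b$, set $S[F,b](\xi,t)=\int_{\mathbb R^2}e^{\pm it(|\xi-\eta|+|\eta|)}b(t,\xi,\eta)\widehat F(\xi-\eta,\eta)\,d\eta$. Let $\Theta_j=\{\omega\in\mathbb R^2:0<\omega_1<2^{-10}\omega_2,\ 2^{j-1}\le|\omega|\le2^{j+1}\}$. $b$ is $(j,m)$-adapted if $b$ is smooth and $b(t,\xi,\eta)=0$ unless $\eta,\xi-\eta\in\Theta_j$ and $\angle(\xi,\eta)\le2^{-m+5}$, where $\angle(\xi,\eta)\in[0,\pi]$ is the angle between $\xi$ and $\eta$. $L^2(\mathbb R^2\times\mathcal E)$ uses Lebesgue measure in $\xi$ times counting measure in $t$; $\|b\|_\infty$ is the supremum of $|b|$. *)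

theory Defs
  imports "HOL-Analysis.Analysis"
begin

inductive_set iter_derivs :: "'a::real_normed_vector set \<Rightarrow> ('a \<Rightarrow> 'b::real_normed_vector) \<Rightarrow> ('a \<Rightarrow> 'b) set"
  for S :: "'a set" and f :: "'a \<Rightarrow> 'b" where
  base: "f \<in> iter_derivs S f"
| step: "g \<in> iter_derivs S f \<Longrightarrow> (\<lambda>x. frechet_derivative g (at x) v) \<in> iter_derivs S f"

definition smooth_on :: "'a::real_normed_vector set \<Rightarrow> ('a \<Rightarrow> 'b::real_normed_vector) \<Rightarrow> bool" where
  "smooth_on S f \<longleftrightarrow> (\<forall>g \<in> iter_derivs S f. \<forall>x\<in>S. g differentiable (at x))"

definition vec_angle :: "real^2 \<Rightarrow> real^2 \<Rightarrow> real" where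
  "vec_angle x y = arccos ((x \<bullet> y) / (norm x * norm y))"

definition Theta :: "nat \<Rightarrow> (real^2) set" where
  "Theta j = {w. 0 < w$1 \<and> w$1 < 2 powr (-10) * w$2 \<and>
                 2 powr (real j - 1) \<le> norm w \<and> norm w \<le> 2 powr (real j + 1)}"

definition adapted :: "nat \<Rightarrow> nat \<Rightarrow> (real \<Rightarrow> real^2 \<Rightarrow> real^2 \<Rightarrow> complex) \<Rightarrow> bool" where
  "adapted j m b \<longleftrightarrow>
     smooth_on ({0<..} \<times> UNIV) (\<lambda>(t::real, \<xi>::real^2, \<eta>::real^2). b t \<xi> \<eta>) \<and>
     (\<forall>t>0. \<forall>\<xi> \<eta>. b t \<xi> \<eta> \<noteq> 0 \<longrightarrow>
        \<eta> \<in> Theta j \<and> \<xi> - \<eta> \<in> Theta j \<and> vec_angle \<xi> \<eta> \<le> 2 powr (5 - real m))"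

definition sup_norm :: "(real \<Rightarrow> real^2 \<Rightarrow> real^2 \<Rightarrow> complex) \<Rightarrow> ennreal" where
  "sup_norm b = (SUP p \<in> {0<..} \<times> (UNIV :: ((real^2) \<times> (real^2)) set).
                   ennreal (cmod (b (fst p) (fst (snd p)) (snd (snd p)))))"

definition L2 :: "('a::euclidean_space \<Rightarrow> complex) set" where
  "L2 = {F. F \<in> borel_measurable lborel \<and> (\<integral>\<^sup>+ x. ennreal ((cmod (F x))\<^sup>2) \<partial>lborel) < \<infinity>}"

text \<open>G is the (Plancherel) L^2 Fourier transform of F, with convention
  hat F(xi) = int e^{-i<x,xi>} F(x) dx, defined as the L^2 limit of the
  Fourier integrals of the truncations of F to balls of radius R.\<close>
definition is_fourier_L2 :: "('a::euclidean_space \<Rightarrow> complex) \<Rightarrow> ('a \<Rightarrow> complex) \<Rightarrow> bool" where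
  "is_fourier_L2 F G \<longleftrightarrow> G \<in> borel_measurable lborel \<and>
     ((\<lambda>R::real. \<integral>\<^sup>+ \<xi>. ennreal ((cmod (G \<xi> -
          (LINT x : cball 0 R | lborel. exp (- \<i> * complex_of_real (x \<bullet> \<xi>)) * F x)))\<^sup>2) \<partial>lborel)
       \<longlongrightarrow> 0) at_top"

text \<open>S[F,b](xi,t), written in terms of G = hat F; s = +1 or -1 is the sign.\<close>
definition S_op :: "real \<Rightarrow> ((real^2) \<times> (real^2) \<Rightarrow> complex) \<Rightarrow> (real \<Rightarrow> real^2 \<Rightarrow> real^2 \<Rightarrow> complex)
                     \<Rightarrow> real^2 \<Rightarrow> real \<Rightarrow> complex" where
  "S_op s G b \<xi> t = (LINT \<eta> | lborel.
      exp (complex_of_real s * \<i> * complex_of_real (t * (norm (\<xi> - \<eta>) + norm \<eta>)))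
      * b t \<xi> \<eta> * G (\<xi> - \<eta>, \<eta>))"

end

theory Submission
  imports Defs "HOL-Probability.Characteristic_Functions"
begin

text \<open>
  On the support of \<open>b(t, \<xi>, \<cdot>)\<close> both \<open>\<eta>\<close> and \<open>\<xi> - \<eta>\<close> lie in the thin sector \<open>\<Theta>\<^sub>j\<close>, so
  \<open>|\<xi>| \<le> 2 \<xi>\<^sub>2\<close> and \<open>|\<eta>| \<le> 2\<^sup>j\<^sup>+\<^sup>1\<close>, while the angle condition bounds the cross product of
  \<open>\<xi>\<close> and \<open>\<eta>\<close> by \<open>|\<xi>| |\<eta>| 2\<^sup>5\<^sup>-\<^sup>m\<close>. Hence \<open>\<eta>\<close> lies in a parallelogram of height \<open>2\<^sup>j\<^sup>+\<^sup>2\<close> and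
  width \<open>O(2\<^sup>j\<^sup>-\<^sup>m)\<close> along the line through \<open>\<xi>\<close>, of area \<open>2\<^sup>2\<^sup>j\<^sup>-\<^sup>m\<^sup>+\<^sup>1\<^sup>0\<close>, and Cauchy-Schwarz in
  \<open>\<eta>\<close> gives \<open>|S[F,b](\<xi>,t)|\<^sup>2 \<le> \<parallel>b\<parallel>\<^sup>2 2\<^sup>2\<^sup>j\<^sup>-\<^sup>m\<^sup>+\<^sup>1\<^sup>0 \<integral> |G(\<xi> - \<eta>, \<eta>)|\<^sup>2 d\<eta>\<close> for the Fourier
  transform \<open>G\<close> of \<open>F\<close>, whatever the phase.
  Integrating in \<open>\<xi>\<close>, undoing the shear \<open>(\<xi>, \<eta>) \<mapsto> (\<xi> - \<eta>, \<eta>)\<close> and applying Plancherel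
  bounds each time slice by a constant times \<open>\<parallel>b\<parallel>\<^sup>2 2\<^sup>2\<^sup>j\<^sup>-\<^sup>m \<parallel>F\<parallel>\<^sup>2\<close>; summing over \<open>t \<in> E\<close> gives
  the factor \<open>#E\<close>.

  Only the Plancherel inequality is needed. For integrable \<open>f\<close> on \<open>\<real>\<^sup>n\<close>, damping \<open>|fourier f|\<^sup>2\<close> by the
  Gaussian window \<open>exp (-|\<xi>|\<^sup>2 / 2\<sigma>\<^sup>2)\<close> and using Fubini turns its integral into
  \<open>\<integral>\<integral> f(x) f(y)\<^sup>* k\<^sub>\<sigma>(x - y)\<close>, where the Fourier transform \<open>k\<^sub>\<sigma>\<close> of the window has total
  mass \<open>(2\<pi>)\<^sup>n\<close>; together with \<open>2 |f(x) f(y)| \<le> |f(x)|\<^sup>2 + |f(y)|\<^sup>2\<close> this gives the bound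
  \<open>(2\<pi>)\<^sup>n \<parallel>f\<parallel>\<^sup>2\<close>, and monotone convergence lets \<open>\<sigma> \<rightarrow> \<infinity>\<close>. The \<open>L\<^sup>2\<close> transform is the limit of the
  transforms of the truncations of \<open>F\<close> to balls, which costs a factor 2.
\<close>

lemma nn_integral_lborel_add:
  fixes h :: "'a::euclidean_space \<Rightarrow> ennreal"
  assumes [measurable]: "h \<in> borel_measurable borel"
  shows "(\<integral>\<^sup>+y. h (c + y) \<partial>lborel) = (\<integral>\<^sup>+y. h y \<partial>lborel)"
proof -
  have "(\<integral>\<^sup>+y. h y \<partial>lborel) = (\<integral>\<^sup>+y. h y \<partial>distr lborel borel ((+) c))"
    by (simp add: lborel_distr_plus)
  also have "\<dots> = (\<integral>\<^sup>+y. h (c + y) \<partial>lborel)"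
    by (subst nn_integral_distr) auto
  finally show ?thesis ..
qed

lemma nn_integral_shear:
  fixes h :: "'a::euclidean_space \<times> 'a \<Rightarrow> ennreal"
  assumes [measurable]: "h \<in> borel_measurable borel"
  shows "(\<integral>\<^sup>+\<xi>. \<integral>\<^sup>+\<eta>. h (\<xi> - \<eta>, \<eta>) \<partial>lborel \<partial>lborel) = (\<integral>\<^sup>+p. h p \<partial>lborel)"
proof -
  have "(\<lambda>p::'a \<times> 'a. (fst p - snd p, snd p)) \<in> borel \<rightarrow>\<^sub>M borel"
    by (intro borel_measurable_continuous_onI continuous_intros)
  then have [measurable]: "(\<lambda>p. h (fst p - snd p, snd p)) \<in> borel_measurable (lborel \<Otimes>\<^sub>M lborel)"
    unfolding lborel_prod using measurable_comp[of _ borel borel h] by (simp add: comp_def)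
  have "(\<integral>\<^sup>+\<xi>. \<integral>\<^sup>+\<eta>. h (\<xi> - \<eta>, \<eta>) \<partial>lborel \<partial>lborel) = (\<integral>\<^sup>+\<eta>. \<integral>\<^sup>+\<xi>. h (\<xi> - \<eta>, \<eta>) \<partial>lborel \<partial>lborel)"
    using lborel_pair.Fubini[of "\<lambda>p. h (fst p - snd p, snd p)"] by simp
  also have "\<dots> = (\<integral>\<^sup>+\<eta>. \<integral>\<^sup>+\<xi>. h (\<xi>, \<eta>) \<partial>lborel \<partial>lborel)"
    using nn_integral_lborel_add[of "\<lambda>\<xi>. h (\<xi>, _)" "- _"] by simp
  also have "\<dots> = (\<integral>\<^sup>+p. h p \<partial>lborel)"
    using lborel_pair.nn_integral_snd[of h] by (simp add: lborel_prod)
  finally show ?thesis .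
qed

text \<open>No integrability hypothesis: the Bochner integral of a non-integrable function is 0.\<close>

lemma norm_integral_le_nn_integral:
  fixes f :: "'a \<Rightarrow> 'b::{banach, second_countable_topology}"
  shows "ennreal (norm (integral\<^sup>L M f)) \<le> (\<integral>\<^sup>+x. ennreal (norm (f x)) \<partial>M)"
  by (cases "integrable M f") (simp_all add: integral_norm_bound_ennreal not_integrable_integral_eq)

lemma integrable_lborel_pair_dominated:
  fixes h :: "'a::euclidean_space \<times> 'b::euclidean_space \<Rightarrow> 'c::{banach,second_countable_topology}"
  assumes "h \<in> borel_measurable (lborel \<Otimes>\<^sub>M lborel)"
    and "integrable lborel u" "integrable lborel v" "\<And>x. u x \<ge> 0" "\<And>y. v y \<ge> 0"
    and "\<And>x y. norm (h (x, y)) \<le> u x * v y"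
  shows "integrable (lborel \<Otimes>\<^sub>M lborel) h"
proof -
  have [measurable]: "u \<in> borel_measurable lborel" "v \<in> borel_measurable lborel"
    using assms(2,3) by auto
  have "(\<integral>\<^sup>+p. ennreal (norm (h p)) \<partial>(lborel \<Otimes>\<^sub>M lborel))
      \<le> (\<integral>\<^sup>+p. ennreal (u (fst p)) * ennreal (v (snd p)) \<partial>(lborel \<Otimes>\<^sub>M lborel))"
    using assms(4-6) by (intro nn_integral_mono) (auto simp: ennreal_mult'[symmetric] split: prod.splits)
  also have "\<dots> = (\<integral>\<^sup>+x. ennreal (u x) \<partial>lborel) * (\<integral>\<^sup>+y. ennreal (v y) \<partial>lborel)"
    by (simp add: lborel.nn_integral_fst[symmetric] nn_integral_cmult nn_integral_multc)
  also have "\<dots> < \<infinity>"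
    using assms(2-5) by (simp add: integrable_iff_bounded ennreal_mult_less_top)
  finally show ?thesis
    using assms(1) by (simp add: integrable_iff_bounded)
qed

lemma borel_measurable_cnj [measurable]:
  "f \<in> borel_measurable M \<Longrightarrow> (\<lambda>x. cnj (f x)) \<in> borel_measurable M"
  by (rule borel_measurable_continuous_on[where f=cnj]) (auto intro: continuous_intros)

lemma power2_norm_le_diff_add:
  fixes a b :: "'a::real_normed_vector"
  shows "(norm a)\<^sup>2 \<le> 2 * (norm (a - b))\<^sup>2 + 2 * (norm b)\<^sup>2"
proof -
  have "norm a \<le> norm (a - b) + norm b"
    using norm_triangle_ineq[of "a - b" b] by simp
  then have "(norm a)\<^sup>2 \<le> (norm (a - b) + norm b)\<^sup>2"
    by (simp add: power_mono)
  also have "\<dots> \<le> 2 * (norm (a - b))\<^sup>2 + 2 * (norm b)\<^sup>2"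
    using sum_squares_bound[of "norm (a - b)" "norm b"] by (simp add: power2_sum)
  finally show ?thesis .
qed

section \<open>Fourier transforms of Gaussians\<close>

definition fourier :: "('a::euclidean_space \<Rightarrow> complex) \<Rightarrow> 'a \<Rightarrow> complex" where
  "fourier f \<xi> = (\<integral>x. exp (- \<i> * complex_of_real (x \<bullet> \<xi>)) * f x \<partial>lborel)"

definition gauss_window :: "real \<Rightarrow> 'a::euclidean_space \<Rightarrow> real" where
  "gauss_window \<sigma> \<xi> = exp (- (\<xi> \<bullet> \<xi>) / (2 * \<sigma>\<^sup>2))"

definition gauss_kernel :: "real \<Rightarrow> 'a::euclidean_space \<Rightarrow> real" where
  "gauss_kernel \<sigma> a = (\<Prod>b\<in>Basis. 2 * pi * normal_density 0 (1 / \<sigma>) (a \<bullet> b))"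

lemma exp_neg_square_eq_normal_density:
  "\<sigma> > 0 \<Longrightarrow> exp (- (u / \<sigma>)\<^sup>2 / 2) = \<sigma> * sqrt (2 * pi) * normal_density 0 \<sigma> u"
  by (simp add: normal_density_def real_sqrt_mult power_divide field_simps)

lemma fourier_std_gaussian:
  "(\<integral>x. exp (- \<i> * complex_of_real (a * x)) * complex_of_real (exp (- x\<^sup>2 / 2)) \<partial>lborel)
     = complex_of_real (sqrt (2 * pi) * exp (- a\<^sup>2 / 2))"
proof -
  have "complex_of_real (exp (- a\<^sup>2 / 2)) = char std_normal_distribution (- a)"
    by (simp add: char_std_normal_distribution)
  also have "\<dots> = (\<integral>x. std_normal_density x *\<^sub>R iexp (- a * x) \<partial>lborel)"
    unfolding char_def by (subst integral_density) auto
  also have "\<dots> = complex_of_real (1 / sqrt (2 * pi))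
      * (\<integral>x. exp (- \<i> * complex_of_real (a * x)) * complex_of_real (exp (- x\<^sup>2 / 2)) \<partial>lborel)"
    unfolding integral_mult_right_zero[symmetric]
    by (intro Bochner_Integration.integral_cong) (simp_all add: std_normal_density_def scaleR_conv_of_real mult_ac)
  finally show ?thesis
    by (simp add: field_simps)
qed

lemma fourier_gaussian_real:
  fixes \<sigma> s :: real
  assumes "\<sigma> > 0"
  shows "(\<integral>u. exp (- \<i> * complex_of_real (s * u)) * complex_of_real (exp (- (u / \<sigma>)\<^sup>2 / 2)) \<partial>lborel)
       = complex_of_real (2 * pi * normal_density 0 (1 / \<sigma>) s)"
proof -
  have "(\<integral>u. exp (- \<i> * complex_of_real (s * u)) * complex_of_real (exp (- (u / \<sigma>)\<^sup>2 / 2)) \<partial>lborel)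
      = \<bar>\<sigma>\<bar> *\<^sub>R (\<integral>x. exp (- \<i> * complex_of_real (s * (0 + \<sigma> * x)))
                     * complex_of_real (exp (- ((0 + \<sigma> * x) / \<sigma>)\<^sup>2 / 2)) \<partial>lborel)"
    using assms by (intro lborel_integral_real_affine) auto
  also have "\<dots> = \<sigma> *\<^sub>R (\<integral>x. exp (- \<i> * complex_of_real ((s * \<sigma>) * x)) * complex_of_real (exp (- x\<^sup>2 / 2)) \<partial>lborel)"
    using assms by (auto intro!: Bochner_Integration.integral_cong simp: mult_ac)
  also have "\<dots> = complex_of_real (\<sigma> * sqrt (2 * pi) * exp (- (s * \<sigma>)\<^sup>2 / 2))"
    unfolding fourier_std_gaussian by (simp add: scaleR_conv_of_real)
  also have "\<sigma> * sqrt (2 * pi) * exp (- (s * \<sigma>)\<^sup>2 / 2) = 2 * pi * normal_density 0 (1 / \<sigma>) s"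
  proof -
    have sqrt_var: "sqrt (2 * pi * (1 / \<sigma>)\<^sup>2) = sqrt (2 * pi) / \<sigma>"
      using assms by (simp add: real_sqrt_mult real_sqrt_divide)
    have "sqrt (2 * pi) * sqrt (2 * pi) = 2 * pi" by simp
    then have "\<sigma> * sqrt (2 * pi) = 2 * pi * (1 / sqrt (2 * pi * (1 / \<sigma>)\<^sup>2))"
      unfolding sqrt_var using assms by (simp add: field_simps)
    moreover have "(s * \<sigma>)\<^sup>2 = s\<^sup>2 / (1 / \<sigma>)\<^sup>2"
      using assms by (simp add: power_divide power_mult_distrib)
    ultimately show ?thesis
      unfolding normal_density_def by simp
  qed
  finally show ?thesis .
qed

lemma exp_inner_eq_prod_Basis:
  fixes a \<xi> :: "'a::euclidean_space"
  shows "exp (- \<i> * complex_of_real (\<xi> \<bullet> a)) = (\<Prod>b\<in>Basis. exp (- \<i> * complex_of_real ((a \<bullet> b) * (\<xi> \<bullet> b))))"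
proof -
  have "- \<i> * complex_of_real (\<xi> \<bullet> a) = (\<Sum>b\<in>Basis. - \<i> * complex_of_real ((a \<bullet> b) * (\<xi> \<bullet> b)))"
    by (subst euclidean_inner) (simp add: sum_distrib_left mult.commute)
  then show ?thesis by (simp add: exp_sum)
qed

lemma gauss_window_eq_prod_Basis:
  "gauss_window \<sigma> \<xi> = (\<Prod>b\<in>Basis. exp (- ((\<xi> \<bullet> b) / \<sigma>)\<^sup>2 / 2))"
proof -
  have "- (\<xi> \<bullet> \<xi>) / (2 * \<sigma>\<^sup>2) = (\<Sum>b\<in>Basis. - ((\<xi> \<bullet> b) / \<sigma>)\<^sup>2 / 2)"
    by (subst euclidean_inner)
       (simp add: sum_divide_distrib sum_negf power_divide power2_eq_square mult_ac)
  then show ?thesis unfolding gauss_window_def by (simp add: exp_sum)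
qed

lemma gauss_window_nonneg: "gauss_window \<sigma> \<xi> \<ge> 0"
  unfolding gauss_window_def by simp

lemma gauss_window_measurable [measurable]: "gauss_window \<sigma> \<in> borel_measurable borel"
  unfolding gauss_window_def by measurable

lemma integrable_exp_neg_square:
  fixes \<sigma> :: real
  assumes "\<sigma> > 0"
  shows "integrable lborel (\<lambda>u. exp (- (u / \<sigma>)\<^sup>2 / 2))"
  unfolding exp_neg_square_eq_normal_density[OF assms] using assms by simp

lemma integrable_gauss_window:
  assumes "\<sigma> > 0"
  shows "integrable lborel (gauss_window \<sigma> :: 'a::euclidean_space \<Rightarrow> real)"
proof -
  have "(\<integral>\<^sup>+\<xi>. ennreal (gauss_window \<sigma> (\<xi>::'a)) \<partial>lborel)
      = (\<integral>\<^sup>+(\<xi>::'a). (\<Prod>b\<in>Basis. ennreal (exp (- ((\<xi> \<bullet> b) / \<sigma>)\<^sup>2 / 2))) \<partial>lborel)"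
    unfolding gauss_window_eq_prod_Basis by (intro nn_integral_cong) (simp add: prod_ennreal)
  also have "\<dots> = (\<Prod>b\<in>(Basis::'a set). \<integral>\<^sup>+u. ennreal (exp (- (u / \<sigma>)\<^sup>2 / 2)) \<partial>lborel)"
    by (rule nn_integral_lborel_prod) auto
  also have "\<dots> < \<infinity>"
    using integrable_exp_neg_square[OF assms]
    by (simp add: integrable_iff_bounded power_less_top_ennreal)
  finally show ?thesis
    by (simp add: integrable_iff_bounded gauss_window_nonneg)
qed

lemma incseq_gauss_window: "incseq (\<lambda>n. gauss_window (real (Suc n)) \<xi>)"
proof (rule incseq_SucI)
  fix n
  have "(\<xi> \<bullet> \<xi>) / (2 * (real (Suc (Suc n)))\<^sup>2) \<le> (\<xi> \<bullet> \<xi>) / (2 * (real (Suc n))\<^sup>2)"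
    by (intro divide_left_mono mult_left_mono power_mono) auto
  then show "gauss_window (real (Suc n)) \<xi> \<le> gauss_window (real (Suc (Suc n))) \<xi>"
    unfolding gauss_window_def by simp
qed

lemma gauss_window_tendsto_1: "(\<lambda>n. gauss_window (real (Suc n)) \<xi>) \<longlonglongrightarrow> 1"
proof -
  have "(\<lambda>n. 1 / real (Suc n)) \<longlonglongrightarrow> 0"
    using LIMSEQ_Suc[OF lim_const_over_n[of 1]] by simp
  then have "(\<lambda>n. - (\<xi> \<bullet> \<xi>) / 2 * ((1 / real (Suc n)) * (1 / real (Suc n)))) \<longlonglongrightarrow> - (\<xi> \<bullet> \<xi>) / 2 * (0 * 0)"
    by (intro tendsto_intros)
  then have "(\<lambda>n. exp (- (\<xi> \<bullet> \<xi>) / (2 * (real (Suc n))\<^sup>2))) \<longlonglongrightarrow> exp 0"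
    by (intro tendsto_intros) (simp add: power2_eq_square field_simps)
  then show ?thesis unfolding gauss_window_def by simp
qed

lemma gauss_kernel_nonneg: "gauss_kernel \<sigma> a \<ge> 0"
  unfolding gauss_kernel_def by (intro prod_nonneg) auto

lemma gauss_kernel_minus: "gauss_kernel \<sigma> (- a) = gauss_kernel \<sigma> a"
  unfolding gauss_kernel_def normal_density_def by (simp add: inner_minus_left)

lemma gauss_kernel_measurable [measurable]: "gauss_kernel \<sigma> \<in> borel_measurable borel"
  unfolding gauss_kernel_def normal_density_def by measurable

lemma fourier_gauss_window:
  fixes a :: "'a::euclidean_space"
  assumes "\<sigma> > 0"
  shows "fourier (\<lambda>\<xi>. complex_of_real (gauss_window \<sigma> \<xi>)) a = complex_of_real (gauss_kernel \<sigma> a)"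
proof -
  interpret P: product_sigma_finite "\<lambda>_::'a. lborel::real measure"
    unfolding product_sigma_finite_def by (simp add: sigma_finite_lborel)
  define h where
    "h b u = exp (- \<i> * complex_of_real ((a \<bullet> b) * u)) * complex_of_real (exp (- (u / \<sigma>)\<^sup>2 / 2))"
    for b u
  have h_integrable: "integrable lborel (h b)" for b
    using integrable_exp_neg_square[OF assms]
  proof (rule Bochner_Integration.integrable_bound)
    show "AE u in lborel. norm (h b u) \<le> norm (exp (- (u / \<sigma>)\<^sup>2 / 2))"
      unfolding h_def by (simp add: norm_mult norm_exp_eq_Re)
  qed (unfold h_def, measurable)
  have "fourier (\<lambda>\<xi>. complex_of_real (gauss_window \<sigma> \<xi>)) a
      = (\<integral>x. (\<lambda>\<xi>. exp (- \<i> * complex_of_real (\<xi> \<bullet> a)) * complex_of_real (gauss_window \<sigma> \<xi>))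
               (\<Sum>b\<in>Basis. x b *\<^sub>R b) \<partial>(\<Pi>\<^sub>M b\<in>Basis. lborel))"
    unfolding fourier_def by (subst lborel_eq) (subst integral_distr, auto)
  also have "\<dots> = (\<integral>x. (\<Prod>b\<in>Basis. h b (x b)) \<partial>(\<Pi>\<^sub>M b\<in>Basis. lborel))"
  proof (rule Bochner_Integration.integral_cong[OF refl])
    fix x :: "'a \<Rightarrow> real"
    have "b \<in> Basis \<Longrightarrow> (\<Sum>b\<in>Basis. x b *\<^sub>R b) \<bullet> b = x b" for b
      by (simp add: inner_sum_left_Basis)
    then show "exp (- \<i> * complex_of_real ((\<Sum>b\<in>Basis. x b *\<^sub>R b) \<bullet> a))
               * complex_of_real (gauss_window \<sigma> (\<Sum>b\<in>Basis. x b *\<^sub>R b)) = (\<Prod>b\<in>Basis. h b (x b))"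
      unfolding exp_inner_eq_prod_Basis[of _ a] gauss_window_eq_prod_Basis h_def prod.distrib of_real_prod
      by (intro arg_cong2[where f="(*)"] prod.cong) auto
  qed
  also have "\<dots> = (\<Prod>b\<in>Basis. integral\<^sup>L lborel (h b))"
    by (rule P.product_integral_prod) (auto intro: h_integrable)
  also have "\<dots> = complex_of_real (gauss_kernel \<sigma> a)"
    unfolding h_def gauss_kernel_def fourier_gaussian_real[OF assms] by simp
  finally show ?thesis .
qed

lemma nn_integral_gauss_kernel:
  assumes "\<sigma> > 0"
  shows "(\<integral>\<^sup>+a. ennreal (gauss_kernel \<sigma> (a::'a::euclidean_space)) \<partial>lborel) = ennreal ((2 * pi) ^ DIM('a))"
proof -
  have density: "(\<integral>\<^sup>+u. ennreal (2 * pi * normal_density 0 (1 / \<sigma>) u) \<partial>lborel) = ennreal (2 * pi)"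
    using assms by (subst nn_integral_eq_integral) auto
  have "(\<integral>\<^sup>+a. ennreal (gauss_kernel \<sigma> (a::'a)) \<partial>lborel)
      = (\<integral>\<^sup>+(a::'a). (\<Prod>b\<in>Basis. ennreal (2 * pi * normal_density 0 (1 / \<sigma>) (a \<bullet> b))) \<partial>lborel)"
    unfolding gauss_kernel_def by (intro nn_integral_cong) (simp add: prod_ennreal)
  also have "\<dots> = (\<Prod>b\<in>(Basis::'a set). \<integral>\<^sup>+u. ennreal (2 * pi * normal_density 0 (1 / \<sigma>) u) \<partial>lborel)"
    by (rule nn_integral_lborel_prod) auto
  finally show ?thesis
    unfolding density by (simp add: prod_ennreal ennreal_power)
qed

lemma nn_integral_gauss_kernel_diff:
  assumes "\<sigma> > 0"
  shows "(\<integral>\<^sup>+y. ennreal (gauss_kernel \<sigma> ((x::'a::euclidean_space) - y)) \<partial>lborel) = ennreal ((2 * pi) ^ DIM('a))"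
proof -
  have "(\<integral>\<^sup>+y. ennreal (gauss_kernel \<sigma> (x - y)) \<partial>lborel) = (\<integral>\<^sup>+y. ennreal (gauss_kernel \<sigma> (- x + y)) \<partial>lborel)"
    by (metis gauss_kernel_minus minus_diff_eq uminus_add_conv_diff)
  also have "\<dots> = (\<integral>\<^sup>+y. ennreal (gauss_kernel \<sigma> (y::'a)) \<partial>lborel)"
    using nn_integral_lborel_add[of "\<lambda>y. ennreal (gauss_kernel \<sigma> y)" "- x"] by simp
  finally show ?thesis
    using nn_integral_gauss_kernel[OF assms] by simp
qed

lemma nn_integral_pair_gauss_kernel:
  fixes u :: "'a::euclidean_space \<Rightarrow> ennreal"
  assumes "\<sigma> > 0" and [measurable]: "u \<in> borel_measurable lborel"
  shows "(\<integral>\<^sup>+p. u (fst p) * ennreal (gauss_kernel \<sigma> (fst p - snd p)) \<partial>lborel)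
           = ennreal ((2 * pi) ^ DIM('a)) * (\<integral>\<^sup>+x. u x \<partial>lborel)" (is "?fst")
    and "(\<integral>\<^sup>+p. u (snd p) * ennreal (gauss_kernel \<sigma> (fst p - snd p)) \<partial>lborel)
           = ennreal ((2 * pi) ^ DIM('a)) * (\<integral>\<^sup>+x. u x \<partial>lborel)" (is "?snd")
proof -
  have inner: "(\<integral>\<^sup>+y. u x * ennreal (gauss_kernel \<sigma> (x - y)) \<partial>lborel) = u x * ennreal ((2 * pi) ^ DIM('a))"
    for x :: 'a
    by (subst nn_integral_cmult) (simp_all add: nn_integral_gauss_kernel_diff[OF assms(1)])
  have "(\<integral>\<^sup>+p. u (fst p) * ennreal (gauss_kernel \<sigma> (fst p - snd p)) \<partial>lborel)
      = (\<integral>\<^sup>+x. \<integral>\<^sup>+y. u x * ennreal (gauss_kernel \<sigma> (x - y)) \<partial>lborel \<partial>lborel)"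
    unfolding lborel_prod[symmetric] by (subst lborel.nn_integral_fst[symmetric]) auto
  then show ?fst
    unfolding inner by (simp add: nn_integral_multc mult.commute)
  have "(\<integral>\<^sup>+p. u (snd p) * ennreal (gauss_kernel \<sigma> (fst p - snd p)) \<partial>lborel)
      = (\<integral>\<^sup>+y. \<integral>\<^sup>+x. u y * ennreal (gauss_kernel \<sigma> (y - x)) \<partial>lborel \<partial>lborel)"
    unfolding lborel_prod[symmetric]
    by (subst lborel_pair.nn_integral_snd[symmetric])
       (auto simp: gauss_kernel_minus[of \<sigma> "_ - _", simplified])
  then show ?snd
    unfolding inner by (simp add: nn_integral_multc mult.commute)
qed

section \<open>The Plancherel inequality\<close>

lemma nn_integral_norm_tensor_gauss_kernel_le:
  fixes f :: "'a::euclidean_space \<Rightarrow> complex"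
  assumes "\<sigma> > 0" and [measurable]: "f \<in> borel_measurable lborel"
  shows "(\<integral>\<^sup>+p. ennreal (cmod (f (fst p) * cnj (f (snd p)) * complex_of_real (gauss_kernel \<sigma> (fst p - snd p)))) \<partial>lborel)
           \<le> ennreal ((2 * pi) ^ DIM('a)) * (\<integral>\<^sup>+x. ennreal ((cmod (f x))\<^sup>2) \<partial>lborel)"
proof -
  let ?H = "\<lambda>p::'a \<times> 'a. f (fst p) * cnj (f (snd p)) * complex_of_real (gauss_kernel \<sigma> (fst p - snd p))"
  let ?k = "\<lambda>p::'a \<times> 'a. ennreal (gauss_kernel \<sigma> (fst p - snd p))"
  define N where "N = (\<integral>\<^sup>+x. ennreal ((cmod (f x))\<^sup>2) \<partial>lborel)"
  have f_sq_measurable: "(\<lambda>x. ennreal ((cmod (f x))\<^sup>2)) \<in> borel_measurable lborel"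
    by measurable
  have pointwise: "2 * ennreal (cmod (?H p)) \<le> ennreal ((cmod (f (fst p)))\<^sup>2) * ?k p + ennreal ((cmod (f (snd p)))\<^sup>2) * ?k p"
    for p
  proof -
    let ?a = "ennreal (cmod (f (fst p)))" and ?b = "ennreal (cmod (f (snd p)))"
    have "2 * ennreal (cmod (?H p)) = 2 * ?a * ?b * ?k p"
      by (simp add: norm_mult ennreal_mult gauss_kernel_nonneg mult.assoc)
    also have "\<dots> \<le> (?a\<^sup>2 + ?b\<^sup>2) * ?k p"
      by (intro mult_right_mono sum_of_squares_ge_ennreal) simp
    finally show ?thesis
      by (simp add: ennreal_power distrib_right)
  qed
  have "2 * (\<integral>\<^sup>+p. ennreal (cmod (?H p)) \<partial>lborel) = (\<integral>\<^sup>+p. 2 * ennreal (cmod (?H p)) \<partial>lborel)"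
    by (rule nn_integral_cmult[symmetric]) (unfold lborel_prod[symmetric], measurable)
  also have "\<dots> \<le> (\<integral>\<^sup>+p. ennreal ((cmod (f (fst p)))\<^sup>2) * ?k p + ennreal ((cmod (f (snd p)))\<^sup>2) * ?k p \<partial>lborel)"
    by (intro nn_integral_mono pointwise)
  also have "\<dots> = (\<integral>\<^sup>+p. ennreal ((cmod (f (fst p)))\<^sup>2) * ?k p \<partial>lborel)
                 + (\<integral>\<^sup>+p. ennreal ((cmod (f (snd p)))\<^sup>2) * ?k p \<partial>lborel)"
    by (rule nn_integral_add) (unfold lborel_prod[symmetric], measurable)+
  also have "\<dots> = 2 * (ennreal ((2 * pi) ^ DIM('a)) * N)"
    unfolding N_def nn_integral_pair_gauss_kernel[OF assms(1) f_sq_measurable] by (rule mult_2[symmetric])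
  finally have "2 * (\<integral>\<^sup>+p. ennreal (cmod (?H p)) \<partial>lborel) \<le> 2 * (ennreal ((2 * pi) ^ DIM('a)) * N)" .
  then show ?thesis
    unfolding N_def by (subst (asm) ennreal_mult_le_mult_iff) auto
qed

context
  fixes f :: "'a::euclidean_space \<Rightarrow> complex"
  assumes f_measurable [measurable]: "f \<in> borel_measurable lborel"
    and f_integrable: "integrable lborel f"
begin

lemma fourier_measurable [measurable]: "fourier f \<in> borel_measurable lborel"
  unfolding fourier_def by measurable

lemma norm_fourier_le: "norm (fourier f \<xi>) \<le> (\<integral>x. norm (f x) \<partial>lborel)"
  using integral_norm_bound[of lborel "\<lambda>x. exp (- \<i> * complex_of_real (x \<bullet> \<xi>)) * f x"]
  by (simp add: fourier_def norm_mult norm_exp_eq_Re)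

lemma integrable_norm_tensor: "integrable (lborel \<Otimes>\<^sub>M lborel) (\<lambda>p::'a \<times> 'a. norm (f (fst p)) * norm (f (snd p)))"
  by (rule integrable_lborel_pair_dominated[where u="\<lambda>x. norm (f x)" and v="\<lambda>x. norm (f x)"])
     (auto simp: f_integrable)

lemma cmod_fourier_sq:
  "complex_of_real ((cmod (fourier f \<xi>))\<^sup>2)
     = (\<integral>p. f (fst p) * cnj (f (snd p)) * exp (- \<i> * complex_of_real ((fst p - snd p) \<bullet> \<xi>)) \<partial>lborel)"
proof -
  let ?e = "\<lambda>x. exp (- \<i> * complex_of_real (x \<bullet> \<xi>))"
  have integrable: "integrable (lborel \<Otimes>\<^sub>M lborel) (\<lambda>(x, y). ?e x * f x * cnj (?e y * f y))"
    by (rule integrable_lborel_pair_dominated[where u="\<lambda>x. norm (f x)" and v="\<lambda>x. norm (f x)"])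
       (auto simp: f_integrable norm_mult norm_exp_eq_Re)
  have "complex_of_real ((cmod (fourier f \<xi>))\<^sup>2) = fourier f \<xi> * cnj (fourier f \<xi>)"
    by (rule complex_norm_square)
  also have "\<dots> = (\<integral>y. (\<integral>x. ?e x * f x * cnj (?e y * f y) \<partial>lborel) \<partial>lborel)"
    unfolding fourier_def Bochner_Integration.integral_cnj[symmetric]
    by (simp add: integral_mult_left_zero integral_mult_right_zero)
  also have "\<dots> = (\<integral>p. (\<lambda>(x, y). ?e x * f x * cnj (?e y * f y)) p \<partial>lborel)"
    using lborel_pair.integral_snd[of "\<lambda>x y. ?e x * f x * cnj (?e y * f y)"] integrable
    by (simp add: lborel_prod)
  also have "\<dots> = (\<integral>p. f (fst p) * cnj (f (snd p)) * exp (- \<i> * complex_of_real ((fst p - snd p) \<bullet> \<xi>)) \<partial>lborel)"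
    by (intro Bochner_Integration.integral_cong)
       (auto simp: exp_cnj exp_add[symmetric] inner_diff_left algebra_simps)
  finally show ?thesis .
qed

lemma integral_gauss_window_fourier_sq:
  assumes "\<sigma> > 0"
  shows "(\<integral>\<xi>. complex_of_real (gauss_window \<sigma> \<xi> * (cmod (fourier f \<xi>))\<^sup>2) \<partial>lborel)
       = (\<integral>p. f (fst p) * cnj (f (snd p)) * complex_of_real (gauss_kernel \<sigma> (fst p - snd p)) \<partial>lborel)"
proof -
  define \<Phi> where
    "\<Phi> p \<xi> = complex_of_real (gauss_window \<sigma> \<xi>)
       * (f (fst p) * cnj (f (snd p)) * exp (- \<i> * complex_of_real ((fst p - snd p) \<bullet> \<xi>)))"
    for p :: "'a \<times> 'a" and \<xi> :: 'a
  have "case_prod \<Phi> \<in> borel_measurable (lborel \<Otimes>\<^sub>M lborel)"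
    unfolding \<Phi>_def split_beta' lborel_prod[symmetric] by measurable
  then have integrable: "integrable (lborel \<Otimes>\<^sub>M lborel) (case_prod \<Phi>)"
    by (rule integrable_lborel_pair_dominated[where u="\<lambda>p. norm (f (fst p)) * norm (f (snd p))" and v="gauss_window \<sigma>"])
       (auto simp: \<Phi>_def integrable_norm_tensor[simplified lborel_prod] integrable_gauss_window[OF assms]
                   gauss_window_nonneg norm_mult norm_exp_eq_Re mult_ac)
  have inner: "(\<integral>\<xi>. \<Phi> p \<xi> \<partial>lborel) = f (fst p) * cnj (f (snd p)) * complex_of_real (gauss_kernel \<sigma> (fst p - snd p))"
    for p
    using fourier_gauss_window[OF assms, of "fst p - snd p"]
    by (simp add: \<Phi>_def fourier_def inner_commute mult_ac integral_mult_right_zero)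
  have "(\<integral>\<xi>. complex_of_real (gauss_window \<sigma> \<xi> * (cmod (fourier f \<xi>))\<^sup>2) \<partial>lborel)
      = (\<integral>\<xi>. (\<integral>p. \<Phi> p \<xi> \<partial>lborel) \<partial>lborel)"
    unfolding of_real_mult cmod_fourier_sq \<Phi>_def by (simp add: integral_mult_right_zero)
  also have "\<dots> = (\<integral>p. (\<integral>\<xi>. \<Phi> p \<xi> \<partial>lborel) \<partial>lborel)"
    by (rule lborel_pair.Fubini_integral[OF integrable])
  finally show ?thesis
    unfolding inner .
qed

lemma nn_integral_gauss_window_fourier_sq_le:
  assumes "\<sigma> > 0"
  shows "(\<integral>\<^sup>+\<xi>. ennreal (gauss_window \<sigma> \<xi> * (cmod (fourier f \<xi>))\<^sup>2) \<partial>lborel)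
           \<le> ennreal ((2 * pi) ^ DIM('a)) * (\<integral>\<^sup>+x. ennreal ((cmod (f x))\<^sup>2) \<partial>lborel)"
proof -
  let ?g = "\<lambda>\<xi>. gauss_window \<sigma> \<xi> * (cmod (fourier f \<xi>))\<^sup>2"
  let ?H = "\<lambda>p::'a \<times> 'a. f (fst p) * cnj (f (snd p)) * complex_of_real (gauss_kernel \<sigma> (fst p - snd p))"
  have "integrable lborel ?g"
  proof (rule Bochner_Integration.integrable_bound)
    show "integrable lborel (\<lambda>\<xi>. gauss_window \<sigma> \<xi> * (\<integral>x. norm (f x) \<partial>lborel)\<^sup>2)"
      using integrable_gauss_window[OF assms] by (rule integrable_mult_left)
    show "AE \<xi> in lborel. norm (?g \<xi>) \<le> norm (gauss_window \<sigma> \<xi> * (\<integral>x. norm (f x) \<partial>lborel)\<^sup>2)"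
      using norm_fourier_le
      by (intro AE_I2) (auto simp: gauss_window_nonneg intro!: mult_left_mono power_mono)
  qed simp
  then have "(\<integral>\<^sup>+\<xi>. ennreal (?g \<xi>) \<partial>lborel) = ennreal (\<integral>\<xi>. ?g \<xi> \<partial>lborel)"
    by (intro nn_integral_eq_integral) (auto simp: gauss_window_nonneg)
  also have "(\<integral>\<xi>. ?g \<xi> \<partial>lborel) = cmod (integral\<^sup>L lborel ?H)"
  proof -
    have "complex_of_real (\<integral>\<xi>. ?g \<xi> \<partial>lborel) = integral\<^sup>L lborel ?H"
      unfolding integral_complex_of_real[symmetric] by (rule integral_gauss_window_fourier_sq[OF assms])
    moreover have "(\<integral>\<xi>. ?g \<xi> \<partial>lborel) \<ge> 0"
      by (intro integral_nonneg_AE) (auto simp: gauss_window_nonneg)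
    ultimately show ?thesis
      by (metis abs_of_nonneg norm_of_real)
  qed
  also have "ennreal (cmod (integral\<^sup>L lborel ?H)) \<le> (\<integral>\<^sup>+p. ennreal (cmod (?H p)) \<partial>lborel)"
    by (rule norm_integral_le_nn_integral)
  also have "\<dots> \<le> ennreal ((2 * pi) ^ DIM('a)) * (\<integral>\<^sup>+x. ennreal ((cmod (f x))\<^sup>2) \<partial>lborel)"
    by (rule nn_integral_norm_tensor_gauss_kernel_le[OF assms f_measurable])
  finally show ?thesis .
qed

lemma nn_integral_fourier_sq_le:
  "(\<integral>\<^sup>+\<xi>. ennreal ((cmod (fourier f \<xi>))\<^sup>2) \<partial>lborel)
     \<le> ennreal ((2 * pi) ^ DIM('a)) * (\<integral>\<^sup>+x. ennreal ((cmod (f x))\<^sup>2) \<partial>lborel)"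
proof -
  let ?u = "\<lambda>n \<xi>. ennreal (gauss_window (real (Suc n)) \<xi> * (cmod (fourier f \<xi>))\<^sup>2)"
  have incseq: "incseq ?u"
    using incseq_gauss_window unfolding incseq_def le_fun_def
    by (auto intro!: ennreal_leI mult_right_mono)
  have "ennreal ((cmod (fourier f \<xi>))\<^sup>2) = (SUP n. ?u n \<xi>)" for \<xi>
  proof (rule LIMSEQ_unique)
    have "(\<lambda>n. gauss_window (real (Suc n)) \<xi> * (cmod (fourier f \<xi>))\<^sup>2) \<longlonglongrightarrow> 1 * (cmod (fourier f \<xi>))\<^sup>2"
      by (intro tendsto_mult gauss_window_tendsto_1 tendsto_const)
    then show "(\<lambda>n. ?u n \<xi>) \<longlonglongrightarrow> ennreal ((cmod (fourier f \<xi>))\<^sup>2)"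
      by (intro tendsto_ennrealI) simp
    show "(\<lambda>n. ?u n \<xi>) \<longlonglongrightarrow> (SUP n. ?u n \<xi>)"
      using incseq by (intro LIMSEQ_SUP) (simp add: incseq_def le_fun_def)
  qed
  then have "(\<integral>\<^sup>+\<xi>. ennreal ((cmod (fourier f \<xi>))\<^sup>2) \<partial>lborel) = (\<integral>\<^sup>+\<xi>. (SUP n. ?u n \<xi>) \<partial>lborel)"
    by simp
  also have "\<dots> = (SUP n. integral\<^sup>N lborel (?u n))"
    using incseq by (rule nn_integral_monotone_convergence_SUP) measurable
  also have "\<dots> \<le> ennreal ((2 * pi) ^ DIM('a)) * (\<integral>\<^sup>+x. ennreal ((cmod (f x))\<^sup>2) \<partial>lborel)"
    by (intro SUP_least nn_integral_gauss_window_fourier_sq_le) simp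
  finally show ?thesis .
qed

end

lemma integrable_indicator_cball_L2:
  fixes F :: "'a::euclidean_space \<Rightarrow> complex"
  assumes "F \<in> L2"
  shows "integrable lborel (\<lambda>x. indicator (cball 0 R) x *\<^sub>R F x)"
proof -
  have F_measurable: "F \<in> borel_measurable lborel"
    and finite: "(\<integral>\<^sup>+x. ennreal ((cmod (F x))\<^sup>2) \<partial>lborel) < \<infinity>"
    using assms unfolding L2_def by auto
  then have [measurable]: "F \<in> borel_measurable borel"
    by simp
  have "(\<integral>\<^sup>+x. ennreal (norm (indicator (cball 0 R) x *\<^sub>R F x)) \<partial>lborel)
      \<le> (\<integral>\<^sup>+x. indicator (cball 0 R) x + ennreal ((cmod (F x))\<^sup>2) \<partial>lborel)"
  proof (rule nn_integral_mono)
    fix x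
    have "2 * cmod (F x) \<le> (cmod (F x))\<^sup>2 + 1"
      using sum_squares_bound[of "cmod (F x)" 1] by simp
    then have "cmod (F x) \<le> 1 + (cmod (F x))\<^sup>2"
      using norm_ge_zero[of "F x"] by linarith
    then have "ennreal (cmod (F x)) \<le> 1 + ennreal ((cmod (F x))\<^sup>2)"
      by (metis ennreal_leI ennreal_plus ennreal_1 zero_le_one zero_le_power2)
    then show "ennreal (norm (indicator (cball 0 R) x *\<^sub>R F x)) \<le> indicator (cball 0 R) x + ennreal ((cmod (F x))\<^sup>2)"
      by (cases "x \<in> cball 0 R") auto
  qed
  also have "\<dots> = emeasure lborel (cball (0::'a) R) + (\<integral>\<^sup>+x. ennreal ((cmod (F x))\<^sup>2) \<partial>lborel)"
    by (subst nn_integral_add) (auto intro: borel_measurable_indicator)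
  also have "\<dots> < \<infinity>"
    using emeasure_bounded_finite[of "cball (0::'a) R"] finite by simp
  finally show ?thesis
    by (rule integrableI_bounded[rotated])
       (intro borel_measurable_scaleR borel_measurable_indicator F_measurable, simp)
qed

lemma nn_integral_sq_le_truncated_fourier:
  fixes F G :: "'a::euclidean_space \<Rightarrow> complex"
  assumes "F \<in> L2" and [measurable]: "G \<in> borel_measurable lborel"
  shows "(\<integral>\<^sup>+\<xi>. ennreal ((cmod (G \<xi>))\<^sup>2) \<partial>lborel)
    \<le> 2 * (\<integral>\<^sup>+\<xi>. ennreal ((cmod (G \<xi> - (LINT x : cball 0 R | lborel. exp (- \<i> * complex_of_real (x \<bullet> \<xi>)) * F x)))\<^sup>2) \<partial>lborel)
      + 2 * (ennreal ((2 * pi) ^ DIM('a)) * (\<integral>\<^sup>+x. ennreal ((cmod (F x))\<^sup>2) \<partial>lborel))"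
proof -
  define f where "f x = indicator (cball 0 R) x *\<^sub>R F x" for x :: 'a
  have "F \<in> borel_measurable lborel"
    using assms(1) unfolding L2_def by simp
  then have f_measurable [measurable]: "f \<in> borel_measurable lborel"
    unfolding f_def by (intro borel_measurable_scaleR borel_measurable_indicator) simp_all
  have f_integrable: "integrable lborel f"
    unfolding f_def by (rule integrable_indicator_cball_L2[OF assms(1)])
  have [measurable]: "fourier f \<in> borel_measurable lborel"
    by (rule fourier_measurable[OF f_measurable f_integrable])
  have fourier_f: "fourier f \<xi> = (LINT x : cball 0 R | lborel. exp (- \<i> * complex_of_real (x \<bullet> \<xi>)) * F x)" for \<xi>
    unfolding fourier_def set_lebesgue_integral_def f_def
    by (intro Bochner_Integration.integral_cong) (auto simp: indicator_def)
  have "(\<integral>\<^sup>+\<xi>. ennreal ((cmod (G \<xi>))\<^sup>2) \<partial>lborel)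
      \<le> (\<integral>\<^sup>+\<xi>. 2 * ennreal ((cmod (G \<xi> - fourier f \<xi>))\<^sup>2) + 2 * ennreal ((cmod (fourier f \<xi>))\<^sup>2) \<partial>lborel)"
  proof (rule nn_integral_mono)
    fix \<xi>
    have "ennreal ((cmod (G \<xi>))\<^sup>2) \<le> ennreal (2 * (cmod (G \<xi> - fourier f \<xi>))\<^sup>2 + 2 * (cmod (fourier f \<xi>))\<^sup>2)"
      using power2_norm_le_diff_add by (rule ennreal_leI)
    then show "ennreal ((cmod (G \<xi>))\<^sup>2)
        \<le> 2 * ennreal ((cmod (G \<xi> - fourier f \<xi>))\<^sup>2) + 2 * ennreal ((cmod (fourier f \<xi>))\<^sup>2)"
      by (simp add: ennreal_mult)
  qed
  also have "\<dots> = 2 * (\<integral>\<^sup>+\<xi>. ennreal ((cmod (G \<xi> - fourier f \<xi>))\<^sup>2) \<partial>lborel)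
                 + 2 * (\<integral>\<^sup>+\<xi>. ennreal ((cmod (fourier f \<xi>))\<^sup>2) \<partial>lborel)"
    by (subst nn_integral_add) (auto simp: nn_integral_cmult)
  also have "(\<integral>\<^sup>+\<xi>. ennreal ((cmod (fourier f \<xi>))\<^sup>2) \<partial>lborel)
      \<le> ennreal ((2 * pi) ^ DIM('a)) * (\<integral>\<^sup>+x. ennreal ((cmod (f x))\<^sup>2) \<partial>lborel)"
    by (rule nn_integral_fourier_sq_le[OF f_measurable f_integrable])
  also have "(\<integral>\<^sup>+x. ennreal ((cmod (f x))\<^sup>2) \<partial>lborel) \<le> (\<integral>\<^sup>+x. ennreal ((cmod (F x))\<^sup>2) \<partial>lborel)"
    unfolding f_def by (intro nn_integral_mono) (auto simp: indicator_def intro!: ennreal_leI)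
  finally show ?thesis
    unfolding fourier_f by (simp add: mult_left_mono add_left_mono)
qed

lemma nn_integral_L2_fourier_le:
  fixes F G :: "'a::euclidean_space \<Rightarrow> complex"
  assumes "F \<in> L2" and "is_fourier_L2 F G"
  shows "(\<integral>\<^sup>+\<xi>. ennreal ((cmod (G \<xi>))\<^sup>2) \<partial>lborel)
           \<le> ennreal (2 * (2 * pi) ^ DIM('a)) * (\<integral>\<^sup>+x. ennreal ((cmod (F x))\<^sup>2) \<partial>lborel)"
proof -
  define C where "C = ennreal ((2 * pi) ^ DIM('a)) * (\<integral>\<^sup>+x. ennreal ((cmod (F x))\<^sup>2) \<partial>lborel)"
  define D where "D R = (\<integral>\<^sup>+\<xi>. ennreal ((cmod (G \<xi> -
      (LINT x : cball 0 R | lborel. exp (- \<i> * complex_of_real (x \<bullet> \<xi>)) * F x)))\<^sup>2) \<partial>lborel)" for R :: real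
  have "G \<in> borel_measurable lborel" and "(D \<longlongrightarrow> 0) at_top"
    using assms(2) unfolding is_fourier_L2_def D_def by auto
  then have "((\<lambda>R. 2 * D R + 2 * C) \<longlongrightarrow> 2 * 0 + 2 * C) at_top"
    by (intro tendsto_intros) auto
  moreover have "\<forall>\<^sub>F R in at_top. (\<integral>\<^sup>+\<xi>. ennreal ((cmod (G \<xi>))\<^sup>2) \<partial>lborel) \<le> 2 * D R + 2 * C"
    unfolding D_def C_def
    by (intro always_eventually allI nn_integral_sq_le_truncated_fourier assms(1) \<open>G \<in> _\<close>)
  ultimately have "(\<integral>\<^sup>+\<xi>. ennreal ((cmod (G \<xi>))\<^sup>2) \<partial>lborel) \<le> 2 * C"
    by (intro tendsto_le[OF trivial_limit_at_top_linorder]) auto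
  also have "2 * C = ennreal (2 * (2 * pi) ^ DIM('a)) * (\<integral>\<^sup>+x. ennreal ((cmod (F x))\<^sup>2) \<partial>lborel)"
    unfolding C_def by (simp add: ennreal_mult mult.assoc)
  finally show ?thesis .
qed

section \<open>The support of adapted symbols\<close>

lemma inner_vec2: "(x::real^2) \<bullet> y = x$1 * y$1 + x$2 * y$2"
  by (simp add: inner_vec_def sum_2)

lemma abs_inner_div_norms_le_1: "\<bar>(x \<bullet> y) / (norm x * norm y)\<bar> \<le> 1"
  for x y :: "'a::real_inner"
  using Cauchy_Schwarz_ineq2[of x y]
  by (cases "norm x * norm y = 0") (simp_all add: abs_div divide_le_eq_1)

lemma vec_angle_nonneg: "vec_angle x y \<ge> 0"
  using abs_inner_div_norms_le_1[of x y] unfolding vec_angle_def abs_le_iff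
  by (intro arccos_lbound) auto

lemma abs_cross_le_vec_angle:
  fixes x y :: "real^2"
  shows "\<bar>x$1 * y$2 - x$2 * y$1\<bar> \<le> norm x * norm y * vec_angle x y"
proof (cases "norm x * norm y = 0")
  case True
  then have "x = 0 \<or> y = 0" by simp
  then show ?thesis by auto
next
  case False
  define q where "q = (x \<bullet> y) / (norm x * norm y)"
  have q_bound: "\<bar>q\<bar> \<le> 1"
    unfolding q_def by (rule abs_inner_div_norms_le_1)
  have "(x$1 * y$2 - x$2 * y$1)\<^sup>2 = (norm x)\<^sup>2 * (norm y)\<^sup>2 - (x \<bullet> y)\<^sup>2"
    unfolding power2_norm_eq_inner inner_vec2 by algebra
  also have "\<dots> = (norm x * norm y)\<^sup>2 * (1 - q\<^sup>2)"
    using False unfolding q_def by (simp add: power_mult_distrib power_divide field_simps)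
  also have "\<dots> = (norm x * norm y * sqrt (1 - q\<^sup>2))\<^sup>2"
    using q_bound by (simp add: power_mult_distrib abs_square_le_1)
  finally have "\<bar>x$1 * y$2 - x$2 * y$1\<bar> = \<bar>norm x * norm y * sqrt (1 - q\<^sup>2)\<bar>"
    by (metis real_sqrt_abs)
  also have "\<dots> = norm x * norm y * sin (arccos q)"
    using q_bound abs_square_le_1[of q] by (simp add: sin_arccos abs_le_iff abs_mult)
  also have "\<dots> \<le> norm x * norm y * arccos q"
    using q_bound by (intro mult_left_mono sin_x_le_x arccos_lbound) auto
  finally show ?thesis
    unfolding vec_angle_def q_def .
qed

lemma Theta_components:
  assumes "w \<in> Theta j"
  shows "0 < w$1" "w$1 < 2 powr (-10) * w$2" "0 < w$2" "norm w \<le> 2 powr (real j + 1)"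
proof -
  show "0 < w$1" "w$1 < 2 powr (-10) * w$2" "norm w \<le> 2 powr (real j + 1)"
    using assms unfolding Theta_def by auto
  then have "0 < 2 powr (-10) * w$2"
    by linarith
  then show "0 < w$2"
    by (simp add: zero_less_mult_iff)
qed

lemma Theta_add_norm_le:
  assumes "\<eta> \<in> Theta j" "\<zeta> \<in> Theta j"
  shows "0 < (\<eta> + \<zeta>)$2" "norm (\<eta> + \<zeta>) \<le> 2 * (\<eta> + \<zeta>)$2"
proof -
  note \<eta> = Theta_components[OF assms(1)] and \<zeta> = Theta_components[OF assms(2)]
  show "0 < (\<eta> + \<zeta>)$2"
    using \<eta>(3) \<zeta>(3) by simp
  have "(\<eta> + \<zeta>)$1 < 2 powr (-10) * (\<eta> + \<zeta>)$2"
    using \<eta>(2) \<zeta>(2) by (simp add: distrib_left)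
  also have "\<dots> \<le> (\<eta> + \<zeta>)$2"
    using \<open>0 < (\<eta> + \<zeta>)$2\<close> powr_mono[of "-10" 0 "2::real"] by (intro mult_left_le_one_le) auto
  finally show "norm (\<eta> + \<zeta>) \<le> 2 * (\<eta> + \<zeta>)$2"
    using norm_le_l1_cart[of "\<eta> + \<zeta>"] \<eta>(1,3) \<zeta>(1,3) by (simp add: sum_2)
qed

definition sheared_box :: "real \<Rightarrow> real \<Rightarrow> real \<Rightarrow> (real^2) set" where
  "sheared_box c r \<delta> = {\<eta>. \<bar>\<eta>$2\<bar> \<le> r \<and> \<bar>\<eta>$1 - c * \<eta>$2\<bar> \<le> \<delta>}"

lemma sheared_box_sets [measurable]: "sheared_box c r \<delta> \<in> sets borel"
  unfolding sheared_box_def by measurable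

lemma emeasure_sheared_box:
  assumes "0 \<le> r" "0 \<le> \<delta>"
  shows "emeasure lborel (sheared_box c r \<delta>) = ennreal (4 * r * \<delta>)"
proof -
  define L :: "real^2 \<Rightarrow> real^2" where "L u = (\<chi> i. if i = 1 then u$1 + c * u$2 else u$2)" for u
  define a :: "real^2" where "a = (\<chi> i. if i = 1 then - \<delta> else - r)"
  have "linear L"
    unfolding L_def by (auto simp: linear_iff vec_eq_iff algebra_simps)
  have box: "u \<in> cbox a (- a) \<longleftrightarrow> \<bar>u$1\<bar> \<le> \<delta> \<and> \<bar>u$2\<bar> \<le> r" for u
    unfolding a_def mem_box_cart by (auto simp: forall_2)
  have image: "sheared_box c r \<delta> = L ` cbox a (- a)"
  proof (intro set_eqI iffI)
    fix \<eta> assume "\<eta> \<in> sheared_box c r \<delta>"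
    then have "(\<chi> i. if i = 1 then \<eta>$1 - c * \<eta>$2 else \<eta>$2) \<in> cbox a (- a)"
      and "\<eta> = L (\<chi> i. if i = 1 then \<eta>$1 - c * \<eta>$2 else \<eta>$2)"
      unfolding sheared_box_def box L_def by (auto simp: vec_eq_iff forall_2)
    then show "\<eta> \<in> L ` cbox a (- a)" by blast
  qed (auto simp: sheared_box_def box L_def)
  have "det (matrix L) = 1"
    unfolding det_2 matrix_def L_def by (simp add: axis_def)
  moreover have "measure lebesgue (cbox a (- a)) = 4 * r * \<delta>"
  proof -
    have "cbox a (- a) \<noteq> {}"
      using box[of 0] assms by auto
    then have "measure lebesgue (cbox a (- a)) = (\<Prod>i\<in>UNIV. (- a)$i - a$i)"
      by (simp add: content_cbox_cart)
    then show ?thesis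
      unfolding a_def by (simp add: UNIV_2)
  qed
  ultimately have "measure lebesgue (sheared_box c r \<delta>) = 4 * r * \<delta>"
    unfolding image using measure_linear_image[OF \<open>linear L\<close>, of "cbox a (- a)"] by simp
  moreover have "sheared_box c r \<delta> \<in> lmeasurable"
    unfolding image by (intro measurable_linear_image \<open>linear L\<close>) simp
  ultimately show ?thesis
    using emeasure_eq_measure2[of "sheared_box c r \<delta>" lebesgue] sheared_box_sets[of c r \<delta>] by simp
qed

lemma Theta_pair_in_sheared_box:
  assumes "\<eta> \<in> Theta j" "\<xi> - \<eta> \<in> Theta j" "vec_angle \<xi> \<eta> \<le> \<alpha>"
  shows "\<eta> \<in> sheared_box (\<xi>$1 / \<xi>$2) (2 powr (real j + 1)) (2 * \<alpha> * 2 powr (real j + 1))"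
proof -
  define r where "r = 2 powr (real j + 1)"
  have "0 \<le> r"
    unfolding r_def by simp
  have norm_\<eta>: "norm \<eta> \<le> r"
    using Theta_components(4)[OF assms(1)] unfolding r_def .
  have "0 < \<xi>$2" and norm_\<xi>: "norm \<xi> \<le> 2 * \<xi>$2"
    using Theta_add_norm_le[OF assms(1,2)] by simp_all
  have "\<bar>\<xi>$1 * \<eta>$2 - \<xi>$2 * \<eta>$1\<bar> \<le> norm \<xi> * norm \<eta> * vec_angle \<xi> \<eta>"
    by (rule abs_cross_le_vec_angle)
  also have "\<dots> \<le> (2 * \<xi>$2) * r * \<alpha>"
    using norm_\<xi> norm_\<eta> assms(3) vec_angle_nonneg[of \<xi> \<eta>] \<open>0 < \<xi>$2\<close> \<open>0 \<le> r\<close>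
    by (intro mult_mono) auto
  finally have "\<bar>\<eta>$1 - \<xi>$1 / \<xi>$2 * \<eta>$2\<bar> \<le> 2 * \<alpha> * r"
    using \<open>0 < \<xi>$2\<close> by (simp add: abs_le_iff field_simps)
  moreover have "\<bar>\<eta>$2\<bar> \<le> r"
    using component_le_norm_cart[of \<eta> 2] norm_\<eta> by simp
  ultimately show ?thesis
    unfolding sheared_box_def r_def by simp
qed

abbreviation adapted_box :: "nat \<Rightarrow> nat \<Rightarrow> real^2 \<Rightarrow> (real^2) set" where
  "adapted_box j m \<xi> \<equiv> sheared_box (\<xi>$1 / \<xi>$2) (2 powr (real j + 1)) (2 * 2 powr (5 - real m) * 2 powr (real j + 1))"

lemma adapted_support_subset:
  assumes "adapted j m b" "t > 0" "b t \<xi> \<eta> \<noteq> 0"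
  shows "\<eta> \<in> adapted_box j m \<xi>"
  using assms Theta_pair_in_sheared_box unfolding adapted_def by blast

lemma emeasure_adapted_box:
  "emeasure lborel (adapted_box j m \<xi>) = ennreal (2 powr (2 * real j - real m + 10))"
proof -
  have "4 * 2 powr (real j + 1) * (2 * 2 powr (5 - real m) * 2 powr (real j + 1))
      = 2 powr 3 * 2 powr (5 - real m) * 2 powr (real j + 1) * 2 powr (real j + 1)"
    by (simp add: mult_ac)
  also have "\<dots> = 2 powr (3 + (5 - real m) + (real j + 1) + (real j + 1))"
    by (simp only: powr_add)
  also have "\<dots> = 2 powr (2 * real j - real m + 10)"
    by (simp add: algebra_simps)
  finally show ?thesis
    by (simp add: emeasure_sheared_box)
qed

section \<open>Estimates for the operator S\<close>

lemma norm_le_sup_norm: "t > 0 \<Longrightarrow> ennreal (cmod (b t \<xi> \<eta>)) \<le> sup_norm b"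
  unfolding sup_norm_def by (rule SUP_upper2[of "(t, \<xi>, \<eta>)"]) auto

lemma cmod_S_op_le:
  fixes G :: "(real^2) \<times> (real^2) \<Rightarrow> complex"
  assumes "adapted j m b" "t > 0" and [measurable]: "G \<in> borel_measurable borel"
  shows "ennreal (cmod (S_op s G b \<xi> t))
           \<le> sup_norm b * (\<integral>\<^sup>+\<eta>. indicator (adapted_box j m \<xi>) \<eta> * ennreal (cmod (G (\<xi> - \<eta>, \<eta>))) \<partial>lborel)"
proof -
  let ?A = "adapted_box j m \<xi>"
  let ?e = "\<lambda>\<eta>. exp (complex_of_real s * \<i> * complex_of_real (t * (norm (\<xi> - \<eta>) + norm \<eta>)))"
  have "ennreal (cmod (S_op s G b \<xi> t)) \<le> (\<integral>\<^sup>+\<eta>. ennreal (cmod (?e \<eta> * b t \<xi> \<eta> * G (\<xi> - \<eta>, \<eta>))) \<partial>lborel)"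
    unfolding S_op_def by (rule norm_integral_le_nn_integral)
  also have "\<dots> \<le> (\<integral>\<^sup>+\<eta>. sup_norm b * (indicator ?A \<eta> * ennreal (cmod (G (\<xi> - \<eta>, \<eta>)))) \<partial>lborel)"
  proof (rule nn_integral_mono)
    fix \<eta>
    show "ennreal (cmod (?e \<eta> * b t \<xi> \<eta> * G (\<xi> - \<eta>, \<eta>)))
            \<le> sup_norm b * (indicator ?A \<eta> * ennreal (cmod (G (\<xi> - \<eta>, \<eta>))))"
    proof (cases "b t \<xi> \<eta> = 0")
      case False
      then have "\<eta> \<in> ?A"
        using adapted_support_subset[OF assms(1,2)] by blast
      then show ?thesis
        using norm_le_sup_norm[OF assms(2), of b \<xi> \<eta>]
        by (simp add: norm_mult norm_exp_eq_Re ennreal_mult mult_right_mono)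
    qed simp
  qed
  also have "\<dots> = sup_norm b * (\<integral>\<^sup>+\<eta>. indicator ?A \<eta> * ennreal (cmod (G (\<xi> - \<eta>, \<eta>))) \<partial>lborel)"
    by (rule nn_integral_cmult) measurable
  finally show ?thesis .
qed

lemma cmod_S_op_sq_le:
  fixes G :: "(real^2) \<times> (real^2) \<Rightarrow> complex"
  assumes "adapted j m b" "t > 0" and [measurable]: "G \<in> borel_measurable borel"
  shows "ennreal ((cmod (S_op s G b \<xi> t))\<^sup>2)
           \<le> (sup_norm b)\<^sup>2 * ennreal (2 powr (2 * real j - real m + 10))
             * (\<integral>\<^sup>+\<eta>. ennreal ((cmod (G (\<xi> - \<eta>, \<eta>)))\<^sup>2) \<partial>lborel)"
proof -
  let ?A = "adapted_box j m \<xi>"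
  define g where "g \<eta> = ennreal (cmod (G (\<xi> - \<eta>, \<eta>)))" for \<eta>
  have [measurable]: "g \<in> borel_measurable borel"
    unfolding g_def by measurable
  have "(\<integral>\<^sup>+\<eta>. indicator ?A \<eta> * g \<eta> \<partial>lborel)\<^sup>2
      \<le> (\<integral>\<^sup>+\<eta>. (indicator ?A \<eta>)\<^sup>2 \<partial>lborel) * (\<integral>\<^sup>+\<eta>. (g \<eta>)\<^sup>2 \<partial>lborel)"
    by (rule Cauchy_Schwarz_nn_integral) measurable
  also have "(\<integral>\<^sup>+\<eta>. (indicator ?A \<eta>)\<^sup>2 \<partial>lborel) = ennreal (2 powr (2 * real j - real m + 10))"
  proof -
    have "(\<lambda>\<eta>. (indicator ?A \<eta>)\<^sup>2 :: ennreal) = indicator ?A"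
      by (auto simp: indicator_def)
    then show ?thesis
      by (simp add: emeasure_adapted_box)
  qed
  also have "(\<integral>\<^sup>+\<eta>. (g \<eta>)\<^sup>2 \<partial>lborel) = (\<integral>\<^sup>+\<eta>. ennreal ((cmod (G (\<xi> - \<eta>, \<eta>)))\<^sup>2) \<partial>lborel)"
    by (simp add: g_def ennreal_power)
  finally have Cauchy_Schwarz: "(\<integral>\<^sup>+\<eta>. indicator ?A \<eta> * g \<eta> \<partial>lborel)\<^sup>2
      \<le> ennreal (2 powr (2 * real j - real m + 10)) * (\<integral>\<^sup>+\<eta>. ennreal ((cmod (G (\<xi> - \<eta>, \<eta>)))\<^sup>2) \<partial>lborel)" .
  have "ennreal ((cmod (S_op s G b \<xi> t))\<^sup>2) = (ennreal (cmod (S_op s G b \<xi> t)))\<^sup>2"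
    by (simp add: ennreal_power)
  also have "\<dots> \<le> (sup_norm b)\<^sup>2 * (\<integral>\<^sup>+\<eta>. indicator ?A \<eta> * g \<eta> \<partial>lborel)\<^sup>2"
    using cmod_S_op_le[OF assms] unfolding g_def by (simp add: power_mono flip: power_mult_distrib)
  also have "\<dots> \<le> (sup_norm b)\<^sup>2 * (ennreal (2 powr (2 * real j - real m + 10))
                     * (\<integral>\<^sup>+\<eta>. ennreal ((cmod (G (\<xi> - \<eta>, \<eta>)))\<^sup>2) \<partial>lborel))"
    using Cauchy_Schwarz by (rule mult_left_mono) simp
  finally show ?thesis
    by (simp add: mult.assoc)
qed

lemma nn_integral_S_op_sq_le:
  fixes G :: "(real^2) \<times> (real^2) \<Rightarrow> complex"
  assumes "adapted j m b" "t > 0" and [measurable]: "G \<in> borel_measurable borel"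
  shows "(\<integral>\<^sup>+\<xi>. ennreal ((cmod (S_op s G b \<xi> t))\<^sup>2) \<partial>lborel)
           \<le> (sup_norm b)\<^sup>2 * ennreal (2 powr (2 * real j - real m + 10))
             * (\<integral>\<^sup>+p. ennreal ((cmod (G p))\<^sup>2) \<partial>lborel)"
proof -
  let ?h = "\<lambda>p. ennreal ((cmod (G p))\<^sup>2)"
  have "(\<lambda>p::(real^2) \<times> (real^2). (fst p - snd p, snd p)) \<in> borel \<rightarrow>\<^sub>M borel"
    by (intro borel_measurable_continuous_onI continuous_intros)
  then have "(\<lambda>p. ?h (fst p - snd p, snd p)) \<in> borel_measurable (lborel \<Otimes>\<^sub>M lborel)"
    unfolding lborel_prod using measurable_comp[of _ borel borel ?h] by (simp add: comp_def)
  then have inner_measurable: "(\<lambda>\<xi>. \<integral>\<^sup>+\<eta>. ?h (\<xi> - \<eta>, \<eta>) \<partial>lborel) \<in> borel_measurable lborel"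
    using lborel.borel_measurable_nn_integral[of "\<lambda>\<xi> \<eta>. ?h (\<xi> - \<eta>, \<eta>)"] by (simp add: split_beta')
  have "(\<integral>\<^sup>+\<xi>. ennreal ((cmod (S_op s G b \<xi> t))\<^sup>2) \<partial>lborel)
      \<le> (\<integral>\<^sup>+\<xi>. (sup_norm b)\<^sup>2 * ennreal (2 powr (2 * real j - real m + 10))
                 * (\<integral>\<^sup>+\<eta>. ?h (\<xi> - \<eta>, \<eta>) \<partial>lborel) \<partial>lborel)"
    by (intro nn_integral_mono cmod_S_op_sq_le assms)
  also have "\<dots> = (sup_norm b)\<^sup>2 * ennreal (2 powr (2 * real j - real m + 10))
                 * (\<integral>\<^sup>+\<xi>. \<integral>\<^sup>+\<eta>. ?h (\<xi> - \<eta>, \<eta>) \<partial>lborel \<partial>lborel)"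
    by (rule nn_integral_cmult[OF inner_measurable])
  also have "(\<integral>\<^sup>+\<xi>. \<integral>\<^sup>+\<eta>. ?h (\<xi> - \<eta>, \<eta>) \<partial>lborel \<partial>lborel) = (\<integral>\<^sup>+p. ?h p \<partial>lborel)"
    by (rule nn_integral_shear) measurable
  finally show ?thesis .
qed

lemma nn_integral_S_op_sq_le_L2:
  fixes F G :: "(real^2) \<times> (real^2) \<Rightarrow> complex"
  assumes "adapted j m b" "t > 0" "F \<in> L2" "is_fourier_L2 F G"
  shows "(\<integral>\<^sup>+\<xi>. ennreal ((cmod (S_op s G b \<xi> t))\<^sup>2) \<partial>lborel)
           \<le> ennreal (2 powr (2 * real j - real m + 10) * (2 * (2 * pi) ^ 4))
             * (sup_norm b)\<^sup>2 * (\<integral>\<^sup>+x. ennreal ((cmod (F x))\<^sup>2) \<partial>lborel)"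
proof -
  have "G \<in> borel_measurable borel"
    using assms(4) unfolding is_fourier_L2_def by simp
  then have "(\<integral>\<^sup>+\<xi>. ennreal ((cmod (S_op s G b \<xi> t))\<^sup>2) \<partial>lborel)
      \<le> (sup_norm b)\<^sup>2 * ennreal (2 powr (2 * real j - real m + 10)) * (\<integral>\<^sup>+p. ennreal ((cmod (G p))\<^sup>2) \<partial>lborel)"
    by (rule nn_integral_S_op_sq_le[OF assms(1,2)])
  also have "\<dots> \<le> (sup_norm b)\<^sup>2 * ennreal (2 powr (2 * real j - real m + 10))
                   * (ennreal (2 * (2 * pi) ^ 4) * (\<integral>\<^sup>+x. ennreal ((cmod (F x))\<^sup>2) \<partial>lborel))"
    using nn_integral_L2_fourier_le[OF assms(3,4)] by (intro mult_left_mono) simp_all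
  finally show ?thesis
    by (simp add: ennreal_mult mult_ac)
qed

theorem proposition4p2:
  shows "\<exists>c::real. c > 0 \<and>
    (\<forall>(s::real) (j::nat) (m::nat) b (E::real set) (F :: (real^2) \<times> (real^2) \<Rightarrow> complex) G.
       s \<in> {1, -1} \<longrightarrow> j \<ge> 1 \<longrightarrow> m \<ge> 1 \<longrightarrow> adapted j m b \<longrightarrow>
       finite E \<longrightarrow> E \<subseteq> {1..2} \<longrightarrow> F \<in> L2 \<longrightarrow> is_fourier_L2 F G \<longrightarrow>
       (\<Sum>t\<in>E. \<integral>\<^sup>+ \<xi>. ennreal ((cmod (S_op s G b \<xi> t))\<^sup>2) \<partial>lborel)
         \<le> ennreal ((c * 2 powr (real j - real m / 2))\<^sup>2 * real (card E))
           * (sup_norm b)\<^sup>2 * (\<integral>\<^sup>+ x. ennreal ((cmod (F x))\<^sup>2) \<partial>lborel))"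
proof -
  define K :: real where "K = 2 * (2 * pi) ^ 4"
  define c where "c = sqrt (2 powr 10 * K)"
  have "c > 0"
    unfolding c_def K_def by simp
  moreover have c_sq: "(c * 2 powr (real j - real m / 2))\<^sup>2 = 2 powr (2 * real j - real m + 10) * K"
    for j m :: nat
  proof -
    have "(2 powr (real j - real m / 2))\<^sup>2 = (2::real) powr (2 * real j - real m)"
      unfolding power2_eq_square powr_add[symmetric] by (simp add: algebra_simps)
    then show ?thesis
      unfolding c_def K_def by (simp add: power_mult_distrib powr_add)
  qed
  ultimately show ?thesis
  proof (intro exI[of _ c] conjI allI impI)
    fix s :: real and j m :: nat and b and E :: "real set" and F G :: "(real^2) \<times> (real^2) \<Rightarrow> complex"
    assume "adapted j m b" "E \<subseteq> {1..2}" "F \<in> L2" "is_fourier_L2 F G"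
    then have "(\<integral>\<^sup>+\<xi>. ennreal ((cmod (S_op s G b \<xi> t))\<^sup>2) \<partial>lborel)
        \<le> ennreal ((c * 2 powr (real j - real m / 2))\<^sup>2) * (sup_norm b)\<^sup>2 * (\<integral>\<^sup>+x. ennreal ((cmod (F x))\<^sup>2) \<partial>lborel)"
      if "t \<in> E" for t
      using that nn_integral_S_op_sq_le_L2[of j m b t F G s] unfolding c_sq K_def by force
    then have "(\<Sum>t\<in>E. \<integral>\<^sup>+\<xi>. ennreal ((cmod (S_op s G b \<xi> t))\<^sup>2) \<partial>lborel)
        \<le> of_nat (card E) * (ennreal ((c * 2 powr (real j - real m / 2))\<^sup>2) * (sup_norm b)\<^sup>2
             * (\<integral>\<^sup>+x. ennreal ((cmod (F x))\<^sup>2) \<partial>lborel))"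
      by (rule sum_bounded_above)
    then show "(\<Sum>t\<in>E. \<integral>\<^sup>+\<xi>. ennreal ((cmod (S_op s G b \<xi> t))\<^sup>2) \<partial>lborel)
        \<le> ennreal ((c * 2 powr (real j - real m / 2))\<^sup>2 * real (card E))
          * (sup_norm b)\<^sup>2 * (\<integral>\<^sup>+x. ennreal ((cmod (F x))\<^sup>2) \<partial>lborel)"
      by (simp add: ennreal_mult ennreal_of_nat_eq_real_of_nat mult_ac)
  qed
qed

end
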